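(* Let $k$ be a field of characteristic $\neq 2$, and let $W=A\wr T$ be the wreath product of the abelian Lie algebras $A$ (basis $a_1,\dots,a_m$) and $T$ (basis $t_1,\dots,t_n$). Then $W$ has the presentation with generators $a_1,\dots,a_m,t_1,\dots,t_n$ and relations $[t_i,t_j]=0$ for $1\le i,j\le n$, and $[[a_k,t_{i_1},\dots,t_{i_r}],[a_l,t_{j_1},\dots,t_{j_s}]]=0$ for all $1\le k,l\le m$, all $r\ge 0$, $s\ge 0$ and all $i_1,\dots,i_r,j_1,\dots,j_s\in\{1,\dots,n\}$.
   Context: Left-normed brackets: $[y_1,\dots,y_n]=[[y_1,\dots,y_{n-1}],y_n]$ for $n>2$. Construction of $A\wr T$: $A$ and $T$ are finite-dimensional abelian Lie algebras over $k$ with bases $\{a_1,\dots,a_m\}$ and $\{t_1,\dots,t_n\}$. Let $U=U(T)=k[t_1,\dots,t_n]$ (the universal enveloping algebra of $T$) and let $B$ be the free right $U$-module with basis $\{a_1,\dots,a_m\}$; $B$ is a right Lie module over $T$ via the action of $T\subset U$. The wreath product is $W=A\wr T=B\oplus T$ (as vector spaces) with bracket $[b_1+s_1,b_2+s_2]=(b_1s_2-b_2s_1)+[s_1,s_2]$ for $b_i\in B$, $s_i\in T$, where $[s_1,s_2]=0$ as $T$ is abelian. Thus $[a_k,t_{i_1},\dots,t_{i_r}]$ corresponds to $a_k t_{i_1}\cdots t_{i_r}\in B$. *)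

theory Defs
  imports Main
begin

record ('k, 'a) lie_alg =
  car  :: "'a set"
  add  :: "'a \<Rightarrow> 'a \<Rightarrow> 'a"
  zer  :: "'a"
  neg  :: "'a \<Rightarrow> 'a"
  smul :: "'k \<Rightarrow> 'a \<Rightarrow> 'a"
  br   :: "'a \<Rightarrow> 'a \<Rightarrow> 'a"

definition lie_algebra :: "('k::field, 'a) lie_alg \<Rightarrow> bool" where
  "lie_algebra L \<longleftrightarrow>
     zer L \<in> car L \<and>
     (\<forall>x\<in>car L. \<forall>y\<in>car L. add L x y \<in> car L) \<and>
     (\<forall>x\<in>car L. neg L x \<in> car L) \<and>
     (\<forall>c. \<forall>x\<in>car L. smul L c x \<in> car L) \<and>
     (\<forall>x\<in>car L. \<forall>y\<in>car L. br L x y \<in> car L) \<and>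
     (\<forall>x\<in>car L. \<forall>y\<in>car L. \<forall>z\<in>car L. add L (add L x y) z = add L x (add L y z)) \<and>
     (\<forall>x\<in>car L. \<forall>y\<in>car L. add L x y = add L y x) \<and>
     (\<forall>x\<in>car L. add L (zer L) x = x) \<and>
     (\<forall>x\<in>car L. add L (neg L x) x = zer L) \<and>
     (\<forall>c d. \<forall>x\<in>car L. smul L c (smul L d x) = smul L (c * d) x) \<and>
     (\<forall>x\<in>car L. smul L 1 x = x) \<and>
     (\<forall>c. \<forall>x\<in>car L. \<forall>y\<in>car L. smul L c (add L x y) = add L (smul L c x) (smul L c y)) \<and>
     (\<forall>c d. \<forall>x\<in>car L. smul L (c + d) x = add L (smul L c x) (smul L d x)) \<and>
     (\<forall>x\<in>car L. \<forall>y\<in>car L. \<forall>z\<in>car L. br L (add L x y) z = add L (br L x z) (br L y z)) \<and>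
     (\<forall>x\<in>car L. \<forall>y\<in>car L. \<forall>z\<in>car L. br L x (add L y z) = add L (br L x y) (br L x z)) \<and>
     (\<forall>c. \<forall>x\<in>car L. \<forall>y\<in>car L. br L (smul L c x) y = smul L c (br L x y)) \<and>
     (\<forall>c. \<forall>x\<in>car L. \<forall>y\<in>car L. br L x (smul L c y) = smul L c (br L x y)) \<and>
     (\<forall>x\<in>car L. br L x x = zer L) \<and>
     (\<forall>x\<in>car L. \<forall>y\<in>car L. \<forall>z\<in>car L.
        add L (add L (br L x (br L y z)) (br L y (br L z x))) (br L z (br L x y)) = zer L)"

definition lie_hom :: "('k::field, 'a) lie_alg \<Rightarrow> ('k, 'b) lie_alg \<Rightarrow> ('a \<Rightarrow> 'b) \<Rightarrow> bool" where
  "lie_hom L M f \<longleftrightarrow>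
     (\<forall>x\<in>car L. f x \<in> car M) \<and>
     (\<forall>x\<in>car L. \<forall>y\<in>car L. f (add L x y) = add M (f x) (f y)) \<and>
     (\<forall>c. \<forall>x\<in>car L. f (smul L c x) = smul M c (f x)) \<and>
     (\<forall>x\<in>car L. \<forall>y\<in>car L. f (br L x y) = br M (f x) (f y))"

definition lie_subalgebra :: "('k::field, 'a) lie_alg \<Rightarrow> 'a set \<Rightarrow> bool" where
  "lie_subalgebra L S \<longleftrightarrow> S \<subseteq> car L \<and> zer L \<in> S \<and>
     (\<forall>x\<in>S. \<forall>y\<in>S. add L x y \<in> S) \<and> (\<forall>x\<in>S. neg L x \<in> S) \<and>
     (\<forall>c. \<forall>x\<in>S. smul L c x \<in> S) \<and> (\<forall>x\<in>S. \<forall>y\<in>S. br L x y \<in> S)"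

definition lie_generates :: "('k::field, 'a) lie_alg \<Rightarrow> 'a set \<Rightarrow> bool" where
  "lie_generates L G \<longleftrightarrow> G \<subseteq> car L \<and>
     (\<forall>S. lie_subalgebra L S \<and> G \<subseteq> S \<longrightarrow> car L \<subseteq> S)"

definition lnbr :: "('k, 'a) lie_alg \<Rightarrow> 'a \<Rightarrow> 'a list \<Rightarrow> 'a" where
  "lnbr L x ys = foldl (br L) x ys"

definition wreath_relations ::
  "('k::field, 'a) lie_alg \<Rightarrow> nat \<Rightarrow> nat \<Rightarrow> (nat \<Rightarrow> 'a) \<Rightarrow> (nat \<Rightarrow> 'a) \<Rightarrow> bool" where
  "wreath_relations L m n a t \<longleftrightarrow>
     (\<forall>k<m. a k \<in> car L) \<and> (\<forall>i<n. t i \<in> car L) \<and>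
     (\<forall>i<n. \<forall>j<n. br L (t i) (t j) = zer L) \<and>
     (\<forall>k<m. \<forall>l<m. \<forall>is js. set is \<subseteq> {..<n} \<and> set js \<subseteq> {..<n} \<longrightarrow>
        br L (lnbr L (a k) (map t is)) (lnbr L (a l) (map t js)) = zer L)"

text \<open>Concrete model of the wreath product W = A wr T = B + T.
  An element is a pair (b, s): b k alpha is the coefficient of a_k t^alpha in B
  (k < m, alpha an exponent vector supported on {..<n}, finitely many nonzero),
  s i is the coefficient of t_i in T (i < n).  Indices are 0-based.\<close>

type_synonym 'k wr_elem = "(nat \<Rightarrow> (nat \<Rightarrow> nat) \<Rightarrow> 'k) \<times> (nat \<Rightarrow> 'k)"

definition wr_carrier :: "nat \<Rightarrow> nat \<Rightarrow> ('k::field) wr_elem set" where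
  "wr_carrier m n = {(b, s).
     finite {(k, \<alpha>). b k \<alpha> \<noteq> 0} \<and>
     (\<forall>k \<alpha>. b k \<alpha> \<noteq> 0 \<longrightarrow> k < m \<and> (\<forall>j\<ge>n. \<alpha> j = 0)) \<and>
     (\<forall>i. s i \<noteq> 0 \<longrightarrow> i < n)}"

text \<open>Right action of s = sum s_i t_i on B: (b s)(k, alpha) = sum_i s_i b(k, alpha - e_i).\<close>
definition wr_act :: "nat \<Rightarrow> (nat \<Rightarrow> (nat \<Rightarrow> nat) \<Rightarrow> 'k::field) \<Rightarrow> (nat \<Rightarrow> 'k)
                      \<Rightarrow> (nat \<Rightarrow> (nat \<Rightarrow> nat) \<Rightarrow> 'k)" where
  "wr_act n b s = (\<lambda>k \<alpha>. \<Sum>i<n. if 0 < \<alpha> i then s i * b k (\<alpha>(i := \<alpha> i - 1)) else 0)"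

definition wreath :: "nat \<Rightarrow> nat \<Rightarrow> ('k::field, 'k wr_elem) lie_alg" where
  "wreath m n = \<lparr> car = wr_carrier m n,
     add = (\<lambda>(b1, s1) (b2, s2). (\<lambda>k \<alpha>. b1 k \<alpha> + b2 k \<alpha>, \<lambda>i. s1 i + s2 i)),
     zer = (\<lambda>k \<alpha>. 0, \<lambda>i. 0),
     neg = (\<lambda>(b, s). (\<lambda>k \<alpha>. - b k \<alpha>, \<lambda>i. - s i)),
     smul = (\<lambda>c (b, s). (\<lambda>k \<alpha>. c * b k \<alpha>, \<lambda>i. c * s i)),
     br = (\<lambda>(b1, s1) (b2, s2).
            (\<lambda>k \<alpha>. wr_act n b1 s2 k \<alpha> - wr_act n b2 s1 k \<alpha>, \<lambda>i. 0)) \<rparr>"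

definition wr_a :: "nat \<Rightarrow> ('k::field) wr_elem" where
  "wr_a k = (\<lambda>k' \<alpha>. if k' = k \<and> \<alpha> = (\<lambda>_. 0) then 1 else 0, \<lambda>i. 0)"

definition wr_t :: "nat \<Rightarrow> ('k::field) wr_elem" where
  "wr_t i = (\<lambda>k \<alpha>. 0, \<lambda>j. if j = i then 1 else 0)"

end

theory Submission
  imports Defs "HOL-Algebra.FiniteProduct"
begin

text \<open>\<open>W\<close> is spanned by the elements \<open>a\<^sub>k t\<^sup>\<alpha>\<close> of \<open>B\<close> together with the \<open>t\<^sub>i\<close>, and is generated by
  the \<open>a\<^sub>k\<close> and \<open>t\<^sub>i\<close> since \<open>[a\<^sub>k t\<^sup>\<alpha>, t\<^sub>i] = a\<^sub>k t\<^sup>\<alpha> t\<^sub>i\<close>. Given a Lie algebra \<open>L\<close> with elements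
  \<open>a\<^sub>k, t\<^sub>i\<close> satisfying the relations, map \<open>a\<^sub>k t\<^sup>\<alpha>\<close> to the left-normed bracket of \<open>a\<^sub>k\<close> with the
  \<open>t\<^sub>i\<close> listed according to \<open>\<alpha>\<close> and extend linearly. Since the \<open>t\<^sub>i\<close> commute in \<open>L\<close>, the Jacobi
  identity shows that the order of the \<open>t\<^sub>i\<close> in such a bracket is irrelevant, so the map intertwines
  multiplication by \<open>t\<^sub>i\<close> with bracketing by \<open>t\<^sub>i\<close>; the relations say that the images of \<open>B\<close>
  commute. Hence the map is a homomorphism, unique because \<open>W\<close> is generated by the \<open>a\<^sub>k, t\<^sub>i\<close>.\<close>

section \<open>Elementary Lie algebra facts\<close>

locale lie =
  fixes L :: "('k::field, 'a) lie_alg"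
  assumes lie_algebra: "lie_algebra L"
begin

lemma zer_closed [simp]: "zer L \<in> car L"
  using lie_algebra unfolding lie_algebra_def by meson

lemma add_closed [simp]: "x \<in> car L \<Longrightarrow> y \<in> car L \<Longrightarrow> add L x y \<in> car L"
  using lie_algebra unfolding lie_algebra_def by meson

lemma neg_closed [simp]: "x \<in> car L \<Longrightarrow> neg L x \<in> car L"
  using lie_algebra unfolding lie_algebra_def by meson

lemma smul_closed [simp]: "x \<in> car L \<Longrightarrow> smul L c x \<in> car L"
  using lie_algebra unfolding lie_algebra_def by meson

lemma br_closed [simp]: "x \<in> car L \<Longrightarrow> y \<in> car L \<Longrightarrow> br L x y \<in> car L"
  using lie_algebra unfolding lie_algebra_def by meson

lemma add_assoc: "x \<in> car L \<Longrightarrow> y \<in> car L \<Longrightarrow> z \<in> car L \<Longrightarrow>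
    add L (add L x y) z = add L x (add L y z)"
  using lie_algebra unfolding lie_algebra_def by meson

lemma add_commute: "x \<in> car L \<Longrightarrow> y \<in> car L \<Longrightarrow> add L x y = add L y x"
  using lie_algebra unfolding lie_algebra_def by meson

lemma add_zer_left [simp]: "x \<in> car L \<Longrightarrow> add L (zer L) x = x"
  using lie_algebra unfolding lie_algebra_def by meson

lemma add_neg_left: "x \<in> car L \<Longrightarrow> add L (neg L x) x = zer L"
  using lie_algebra unfolding lie_algebra_def by meson

lemma smul_smul: "x \<in> car L \<Longrightarrow> smul L c (smul L d x) = smul L (c * d) x"
  using lie_algebra unfolding lie_algebra_def by meson

lemma smul_one [simp]: "x \<in> car L \<Longrightarrow> smul L 1 x = x"
  using lie_algebra unfolding lie_algebra_def by meson

lemma smul_add_right: "x \<in> car L \<Longrightarrow> y \<in> car L \<Longrightarrow>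
    smul L c (add L x y) = add L (smul L c x) (smul L c y)"
  using lie_algebra unfolding lie_algebra_def by meson

lemma smul_add_left: "x \<in> car L \<Longrightarrow> smul L (c + d) x = add L (smul L c x) (smul L d x)"
  using lie_algebra unfolding lie_algebra_def by meson

lemma br_add_left: "x \<in> car L \<Longrightarrow> y \<in> car L \<Longrightarrow> z \<in> car L \<Longrightarrow>
    br L (add L x y) z = add L (br L x z) (br L y z)"
  using lie_algebra unfolding lie_algebra_def by meson

lemma br_add_right: "x \<in> car L \<Longrightarrow> y \<in> car L \<Longrightarrow> z \<in> car L \<Longrightarrow>
    br L x (add L y z) = add L (br L x y) (br L x z)"
  using lie_algebra unfolding lie_algebra_def by meson

lemma br_smul_left: "x \<in> car L \<Longrightarrow> y \<in> car L \<Longrightarrow> br L (smul L c x) y = smul L c (br L x y)"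
  using lie_algebra unfolding lie_algebra_def by meson

lemma br_smul_right: "x \<in> car L \<Longrightarrow> y \<in> car L \<Longrightarrow> br L x (smul L c y) = smul L c (br L x y)"
  using lie_algebra unfolding lie_algebra_def by meson

lemma br_self: "x \<in> car L \<Longrightarrow> br L x x = zer L"
  using lie_algebra unfolding lie_algebra_def by meson

lemma jacobi: "x \<in> car L \<Longrightarrow> y \<in> car L \<Longrightarrow> z \<in> car L \<Longrightarrow>
    add L (add L (br L x (br L y z)) (br L y (br L z x))) (br L z (br L x y)) = zer L"
  using lie_algebra unfolding lie_algebra_def by meson

lemma add_zer_right [simp]: "x \<in> car L \<Longrightarrow> add L x (zer L) = x"
  using add_commute[of x "zer L"] by simp

lemma add_left_cancel:
  assumes "x \<in> car L" "y \<in> car L" "z \<in> car L" and "add L x y = add L x z"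
  shows "y = z"
proof -
  have "add L (add L (neg L x) x) y = add L (add L (neg L x) x) z"
    using assms by (simp add: add_assoc)
  then show ?thesis
    using assms by (simp add: add_neg_left)
qed

lemma smul_zero_left [simp]: "x \<in> car L \<Longrightarrow> smul L 0 x = zer L"
  using smul_add_left[of x 0 0] add_left_cancel[of "smul L 0 x" "smul L 0 x" "zer L"] by simp

lemma smul_zer [simp]: "smul L c (zer L) = zer L"
  using smul_smul[of "zer L" c 0] by simp

lemma br_zer_left [simp]: "y \<in> car L \<Longrightarrow> br L (zer L) y = zer L"
  using br_smul_left[of "zer L" y 0] by simp

lemma br_zer_right [simp]: "y \<in> car L \<Longrightarrow> br L y (zer L) = zer L"
  using br_smul_right[of y "zer L" 0] by simp

lemma add_smul_minus_one [simp]: "x \<in> car L \<Longrightarrow> add L x (smul L (-1) x) = zer L"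
  using smul_add_left[of x 1 "-1"] by simp

lemma neg_eq_smul: "x \<in> car L \<Longrightarrow> neg L x = smul L (-1) x"
  using add_left_cancel[of x "neg L x" "smul L (-1) x"] add_commute[of x "neg L x"]
  by (simp add: add_neg_left)

lemma add_add_swap: "x \<in> car L \<Longrightarrow> y \<in> car L \<Longrightarrow> z \<in> car L \<Longrightarrow> w \<in> car L \<Longrightarrow>
    add L (add L x y) (add L z w) = add L (add L x z) (add L y w)"
  by (metis add_assoc add_commute add_closed)

lemma br_antisym:
  assumes "x \<in> car L" "y \<in> car L"
  shows "br L y x = smul L (-1) (br L x y)"
proof -
  have "zer L = br L (add L x y) (add L x y)"
    using assms by (simp add: br_self)
  also have "\<dots> = add L (add L (br L x x) (br L y x)) (add L (br L x y) (br L y y))"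
    using assms by (simp add: br_add_left br_add_right)
  also have "\<dots> = add L (br L x y) (br L y x)"
    using assms by (simp add: br_self add_commute)
  finally show ?thesis
    using assms add_left_cancel[of "br L x y" "br L y x" "smul L (-1) (br L x y)"] by simp
qed

lemma br_br_commute:
  assumes u: "u \<in> car L" and x: "x \<in> car L" and y: "y \<in> car L" and xy: "br L x y = zer L"
  shows "br L (br L u x) y = br L (br L u y) x"
proof -
  have "br L x (br L y u) = br L (br L u y) x"
    using assms by (simp add: br_antisym[of u y] br_antisym[of "br L u y" x] br_smul_right smul_smul)
  moreover have "br L y (br L u x) = smul L (-1) (br L (br L u x) y)"
    using assms by (simp add: br_antisym[of "br L u x" y])
  ultimately have "add L (br L (br L u y) x) (smul L (-1) (br L (br L u x) y)) = zer L"
    using jacobi[OF u x y] xy assms by simp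
  then have "smul L (-1) (br L (br L u x) y) = smul L (-1) (br L (br L u y) x)"
    using assms add_left_cancel[of "br L (br L u y) x"] by simp
  then have "smul L (-1) (smul L (-1) (br L (br L u x) y))
      = smul L (-1) (smul L (-1) (br L (br L u y) x))" by simp
  then show ?thesis
    using assms by (simp add: smul_smul)
qed

end

section \<open>Finite sums\<close>

definition additive_monoid :: "('k, 'a) lie_alg \<Rightarrow> 'a monoid" where
  "additive_monoid L = \<lparr>carrier = car L, mult = add L, one = zer L\<rparr>"

context lie
begin

lemma additive_monoid_simps [simp]:
  "carrier (additive_monoid L) = car L" "mult (additive_monoid L) = add L"
  "one (additive_monoid L) = zer L"
  by (simp_all add: additive_monoid_def)

lemma comm_monoid_additive: "comm_monoid (additive_monoid L)"
  by unfold_locales (auto simp: add_assoc intro: add_commute)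

interpretation additive: comm_monoid "additive_monoid L"
  by (rule comm_monoid_additive)

definition lsum :: "('x \<Rightarrow> 'a) \<Rightarrow> 'x set \<Rightarrow> 'a" where
  "lsum g A = finprod (additive_monoid L) g A"

lemma lsum_closed [simp]: "(\<And>x. x \<in> A \<Longrightarrow> g x \<in> car L) \<Longrightarrow> lsum g A \<in> car L"
  unfolding lsum_def using additive.finprod_closed[of g A] by (auto simp: Pi_def)

lemma lsum_empty [simp]: "lsum g {} = zer L"
  by (simp add: lsum_def)

lemma lsum_infinite: "infinite A \<Longrightarrow> lsum g A = zer L"
  by (simp add: lsum_def)

lemma lsum_insert: "finite A \<Longrightarrow> a \<notin> A \<Longrightarrow> (\<And>x. x \<in> insert a A \<Longrightarrow> g x \<in> car L) \<Longrightarrow>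
    lsum g (insert a A) = add L (g a) (lsum g A)"
  unfolding lsum_def using additive.finprod_insert[of A a g] by (auto simp: Pi_def)

lemma lsum_add: "(\<And>x. x \<in> A \<Longrightarrow> f x \<in> car L) \<Longrightarrow> (\<And>x. x \<in> A \<Longrightarrow> g x \<in> car L) \<Longrightarrow>
    lsum (\<lambda>x. add L (f x) (g x)) A = add L (lsum f A) (lsum g A)"
  unfolding lsum_def using additive.finprod_multf[of f A g] by (auto simp: Pi_def)

lemma lsum_zer: "(\<And>x. x \<in> A \<Longrightarrow> g x = zer L) \<Longrightarrow> lsum g A = zer L"
  unfolding lsum_def using additive.finprod_one_eqI[of A g] by simp

lemma lsum_cong: "A = B \<Longrightarrow> (\<And>x. x \<in> B \<Longrightarrow> g x \<in> car L) \<Longrightarrow> (\<And>x. x \<in> B \<Longrightarrow> f x = g x) \<Longrightarrow>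
    lsum f A = lsum g B"
  unfolding lsum_def using additive.finprod_cong'[of A B g f] by (auto simp: Pi_def)

lemma lsum_reindex: "(\<And>x. x \<in> h ` A \<Longrightarrow> g x \<in> car L) \<Longrightarrow> inj_on h A \<Longrightarrow>
    lsum g (h ` A) = lsum (\<lambda>x. g (h x)) A"
  unfolding lsum_def using additive.finprod_reindex[of g h A] by (auto simp: Pi_def)

lemma lsum_mono_neutral: "finite B \<Longrightarrow> A \<subseteq> B \<Longrightarrow> (\<And>x. x \<in> B - A \<Longrightarrow> g x = zer L) \<Longrightarrow>
    (\<And>x. x \<in> B \<Longrightarrow> g x \<in> car L) \<Longrightarrow> lsum g A = lsum g B"
  unfolding lsum_def using additive.finprod_mono_neutral_cong_left[of B A g g]
  by (auto simp: Pi_def)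

lemma lsum_single:
  assumes "i \<in> A" "finite A" "\<And>x. x \<in> A \<Longrightarrow> x \<noteq> i \<Longrightarrow> g x = zer L" "\<And>x. x \<in> A \<Longrightarrow> g x \<in> car L"
  shows "lsum g A = g i"
proof -
  have "lsum g A = lsum g {i}"
    using assms by (intro lsum_mono_neutral[symmetric]) auto
  also have "\<dots> = g i"
    using assms lsum_insert[of "{}" i g] by simp
  finally show ?thesis .
qed

lemma lsum_additive:
  assumes "\<And>x. x \<in> car L \<Longrightarrow> h x \<in> car L"
    and "\<And>x y. x \<in> car L \<Longrightarrow> y \<in> car L \<Longrightarrow> h (add L x y) = add L (h x) (h y)"
    and "h (zer L) = zer L" and "\<And>x. x \<in> A \<Longrightarrow> g x \<in> car L"
  shows "h (lsum g A) = lsum (\<lambda>x. h (g x)) A"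
  using assms(4)
proof (induction A rule: infinite_finite_induct)
  case (insert a A)
  have "lsum g (insert a A) = add L (g a) (lsum g A)"
    using insert by (intro lsum_insert) auto
  moreover have "lsum (\<lambda>x. h (g x)) (insert a A) = add L (h (g a)) (lsum (\<lambda>x. h (g x)) A)"
    using insert assms(1) by (intro lsum_insert) auto
  ultimately show ?case
    using insert assms(2) by simp
qed (simp_all add: lsum_infinite assms(3))

lemma lsum_smul: "(\<And>x. x \<in> A \<Longrightarrow> g x \<in> car L) \<Longrightarrow>
    smul L c (lsum g A) = lsum (\<lambda>x. smul L c (g x)) A"
  by (rule lsum_additive) (simp_all add: smul_add_right)

lemma lsum_br_left: "y \<in> car L \<Longrightarrow> (\<And>x. x \<in> A \<Longrightarrow> g x \<in> car L) \<Longrightarrow>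
    br L (lsum g A) y = lsum (\<lambda>x. br L (g x) y) A"
  by (rule lsum_additive[where h = "\<lambda>x. br L x y"]) (simp_all add: br_add_left)

lemma lsum_br_right: "y \<in> car L \<Longrightarrow> (\<And>x. x \<in> A \<Longrightarrow> g x \<in> car L) \<Longrightarrow>
    br L y (lsum g A) = lsum (\<lambda>x. br L y (g x)) A"
  by (rule lsum_additive) (simp_all add: br_add_right)

lemma lsum_in_subalgebra:
  assumes S: "lie_subalgebra L S" and g: "\<And>x. x \<in> A \<Longrightarrow> g x \<in> S"
  shows "lsum g A \<in> S"
  using g
proof (induction A rule: infinite_finite_induct)
  case (insert a A)
  have "g x \<in> car L" if "x \<in> insert a A" for x
    using S insert.prems that unfolding lie_subalgebra_def by blast
  with insert have "lsum g (insert a A) = add L (g a) (lsum g A)"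
    by (intro lsum_insert) auto
  with S insert show ?case
    unfolding lie_subalgebra_def by simp
qed (use S in \<open>simp_all add: lie_subalgebra_def lsum_infinite\<close>)

end

lemma lie_hom_zer:
  assumes "lie_algebra L" "lie_algebra M" "lie_hom L M f"
  shows "f (zer L) = zer M"
proof -
  interpret L: lie L by (rule lie.intro) fact
  interpret M: lie M by (rule lie.intro) fact
  have "f (zer L) = f (smul L 0 (zer L))"
    by simp
  also have "\<dots> = smul M 0 (f (zer L))"
    using assms(3) L.zer_closed unfolding lie_hom_def by blast
  also have "\<dots> = zer M"
    using assms(3) unfolding lie_hom_def by simp
  finally show ?thesis .
qed

lemma lie_subalgebra_equalizer:
  assumes L: "lie_algebra L" and M: "lie_algebra M" and f: "lie_hom L M f" and g: "lie_hom L M g"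
  shows "lie_subalgebra L {x \<in> car L. f x = g x}"
proof -
  interpret L: lie L by (rule lie.intro) fact
  have "f (neg L x) = g (neg L x)" if "x \<in> car L" "f x = g x" for x
    using that f g by (simp add: L.neg_eq_smul lie_hom_def)
  then show ?thesis
    using f g unfolding lie_subalgebra_def lie_hom_def
    by (simp add: lie_hom_zer[OF L M f] lie_hom_zer[OF L M g])
qed

lemma lie_hom_eq_on_generated:
  assumes "lie_algebra L" "lie_algebra M" "lie_hom L M f" "lie_hom L M g"
    and "lie_generates L G" "\<And>x. x \<in> G \<Longrightarrow> f x = g x" "x \<in> car L"
  shows "f x = g x"
  using assms lie_subalgebra_equalizer[of L M f g] unfolding lie_generates_def by blast

section \<open>Left-normed brackets under the wreath relations\<close>

lemma lnbr_Nil [simp]: "lnbr L x [] = x"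
  by (simp add: lnbr_def)

lemma lnbr_Cons [simp]: "lnbr L x (y # ys) = lnbr L (br L x y) ys"
  by (simp add: lnbr_def)

lemma lnbr_append [simp]: "lnbr L x (ys @ zs) = lnbr L (lnbr L x ys) zs"
  by (simp add: lnbr_def)

definition exponent_word :: "nat \<Rightarrow> (nat \<Rightarrow> nat) \<Rightarrow> nat list" where
  "exponent_word n \<alpha> = concat (map (\<lambda>j. replicate (\<alpha> j) j) [0..<n])"

lemma set_exponent_word: "set (exponent_word n \<alpha>) \<subseteq> {..<n}"
  unfolding exponent_word_def by auto

lemma exponent_word_zero [simp]: "exponent_word n (\<lambda>_. 0) = []"
  by (simp add: exponent_word_def)

lemma exponent_word_incr:
  assumes "i < n"
  obtains P R where "exponent_word n \<alpha> = P @ replicate (\<alpha> i) i @ R"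
    and "exponent_word n (\<alpha>(i := Suc (\<alpha> i))) = P @ replicate (Suc (\<alpha> i)) i @ R"
proof -
  have split: "[0..<n] = [0..<i] @ i # [Suc i..<n]"
    using assms upt_add_eq_append[of 0 i "n - i"] upt_conv_Cons[of i n] by simp
  have unchanged: "map (\<lambda>j. replicate (if j = i then Suc (\<alpha> i) else \<alpha> j) j) xs = map (\<lambda>j. replicate (\<alpha> j) j) xs"
    if "i \<notin> set xs" for xs
    using that by (intro map_cong) auto
  show ?thesis
    by (rule that[of "concat (map (\<lambda>j. replicate (\<alpha> j) j) [0..<i])"
          "concat (map (\<lambda>j. replicate (\<alpha> j) j) [Suc i..<n])"])
      (simp_all add: exponent_word_def split unchanged)
qed

locale wreath_relations_lie = lie L for L :: "('k::field, 'a) lie_alg" +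
  fixes m n :: nat and a t :: "nat \<Rightarrow> 'a"
  assumes relations: "wreath_relations L m n a t"
begin

lemma a_closed [simp]: "k < m \<Longrightarrow> a k \<in> car L"
  and t_closed [simp]: "i < n \<Longrightarrow> t i \<in> car L"
  and br_t_t: "i < n \<Longrightarrow> j < n \<Longrightarrow> br L (t i) (t j) = zer L"
  and br_lnbr_lnbr: "k < m \<Longrightarrow> l < m \<Longrightarrow> set is \<subseteq> {..<n} \<Longrightarrow> set js \<subseteq> {..<n} \<Longrightarrow>
    br L (lnbr L (a k) (map t is)) (lnbr L (a l) (map t js)) = zer L"
  using relations unfolding wreath_relations_def by blast+

lemma lnbr_t_closed [simp]: "x \<in> car L \<Longrightarrow> set is \<subseteq> {..<n} \<Longrightarrow> lnbr L x (map t is) \<in> car L"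
  by (induction "is" arbitrary: x) auto

lemma lnbr_t_rotate:
  assumes "v \<in> car L" "set zs \<subseteq> {..<n}" "i < n"
  shows "lnbr L v (map t (zs @ [i])) = lnbr L (br L v (t i)) (map t zs)"
  using assms(2)
proof (induction zs rule: rev_induct)
  case (snoc z zs)
  then have "z < n" "set zs \<subseteq> {..<n}" by auto
  then have "br L (br L (lnbr L v (map t zs)) (t z)) (t i)
      = br L (br L (lnbr L v (map t zs)) (t i)) (t z)"
    using assms by (intro br_br_commute) (simp_all add: br_t_t)
  with snoc show ?case by simp
qed simp

text \<open>The image of the basis element \<open>a\<^sub>k t\<^sup>\<alpha>\<close> of the wreath product.\<close>
definition monomial :: "nat \<Rightarrow> (nat \<Rightarrow> nat) \<Rightarrow> 'a" where
  "monomial k \<alpha> = lnbr L (a k) (map t (exponent_word n \<alpha>))"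

lemma monomial_closed [simp]: "k < m \<Longrightarrow> monomial k \<alpha> \<in> car L"
  unfolding monomial_def using set_exponent_word by simp

lemma br_monomial_monomial: "k < m \<Longrightarrow> l < m \<Longrightarrow> br L (monomial k \<alpha>) (monomial l \<beta>) = zer L"
  unfolding monomial_def using br_lnbr_lnbr set_exponent_word by blast

lemma monomial_incr:
  assumes k: "k < m" and i: "i < n"
  shows "monomial k (\<alpha>(i := Suc (\<alpha> i))) = br L (monomial k \<alpha>) (t i)"
proof -
  obtain P R where PR: "exponent_word n \<alpha> = P @ replicate (\<alpha> i) i @ R"
    "exponent_word n (\<alpha>(i := Suc (\<alpha> i))) = P @ replicate (Suc (\<alpha> i)) i @ R"
    using exponent_word_incr[OF i] by blast
  have sets: "set P \<subseteq> {..<n}" "set R \<subseteq> {..<n}"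
    using set_exponent_word[of n \<alpha>] unfolding PR by auto
  define v where "v = lnbr L (a k) (map t (P @ replicate (\<alpha> i) i))"
  have v: "v \<in> car L"
    unfolding v_def using sets k i by (intro lnbr_t_closed) auto
  have "monomial k (\<alpha>(i := Suc (\<alpha> i))) = lnbr L v (map t (i # R))"
    unfolding monomial_def PR(2) v_def replicate_append_same[symmetric] replicate_Suc by simp
  also have "\<dots> = lnbr L (br L v (t i)) (map t R)"
    by simp
  also have "\<dots> = lnbr L v (map t (R @ [i]))"
    using lnbr_t_rotate[OF v sets(2) i] by simp
  also have "\<dots> = br L (monomial k \<alpha>) (t i)"
    unfolding monomial_def PR(1) v_def by simp
  finally show ?thesis .
qed

end

section \<open>The wreath product\<close>

type_synonym 'k coeffs = "nat \<Rightarrow> (nat \<Rightarrow> nat) \<Rightarrow> 'k"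

definition coeff_supp :: "'k::zero coeffs \<Rightarrow> (nat \<times> (nat \<Rightarrow> nat)) set" where
  "coeff_supp b = {(k, \<alpha>). b k \<alpha> \<noteq> 0}"

definition base_coeffs :: "nat \<Rightarrow> nat \<Rightarrow> 'k::zero coeffs \<Rightarrow> bool" where
  "base_coeffs m n b \<longleftrightarrow> finite (coeff_supp b) \<and> (\<forall>k \<alpha>. b k \<alpha> \<noteq> 0 \<longrightarrow> k < m \<and> (\<forall>j\<ge>n. \<alpha> j = 0))"

lemma wr_carrier_iff: "x \<in> wr_carrier m n \<longleftrightarrow> base_coeffs m n (fst x) \<and> (\<forall>i. snd x i \<noteq> 0 \<longrightarrow> i < n)"
  unfolding wr_carrier_def base_coeffs_def coeff_supp_def by (cases x) auto

text \<open>Multiplication by \<open>t\<^sub>i\<close> on the free \<open>k[t]\<close>-module \<open>B\<close>.\<close>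
definition shift_coeffs :: "nat \<Rightarrow> 'k::zero coeffs \<Rightarrow> 'k coeffs" where
  "shift_coeffs i b = (\<lambda>k \<beta>. if 0 < \<beta> i then b k (\<beta>(i := \<beta> i - 1)) else 0)"

definition incr_exponent :: "nat \<Rightarrow> nat \<times> (nat \<Rightarrow> nat) \<Rightarrow> nat \<times> (nat \<Rightarrow> nat)" where
  "incr_exponent i p = (fst p, (snd p)(i := Suc (snd p i)))"

lemma inj_incr_exponent: "inj (incr_exponent i)"
proof (rule injI)
  fix p q
  assume eq: "incr_exponent i p = incr_exponent i q"
  have "snd p j = snd q j" for j
    using arg_cong[OF eq, of "\<lambda>p. snd p j"] arg_cong[OF eq, of "\<lambda>p. snd p i"]
    by (cases "j = i") (simp_all add: incr_exponent_def)
  then show "p = q"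
    using eq by (simp add: incr_exponent_def prod_eq_iff fun_eq_iff)
qed

lemma shift_coeffs_incr [simp]: "shift_coeffs i b k (\<alpha>(i := Suc (\<alpha> i))) = b k \<alpha>"
  by (simp add: shift_coeffs_def)

lemma coeff_supp_shift_coeffs: "coeff_supp (shift_coeffs i b) = incr_exponent i ` coeff_supp b"
proof (intro equalityI subsetI)
  fix p
  assume "p \<in> coeff_supp (shift_coeffs i b)"
  then obtain k \<beta> where p: "p = (k, \<beta>)" "0 < \<beta> i" "b k (\<beta>(i := \<beta> i - 1)) \<noteq> 0"
    unfolding coeff_supp_def shift_coeffs_def by (auto split: if_splits)
  then have "p = incr_exponent i (k, \<beta>(i := \<beta> i - 1))"
    by (auto simp: incr_exponent_def)
  with p show "p \<in> incr_exponent i ` coeff_supp b"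
    unfolding coeff_supp_def by blast
qed (auto simp: coeff_supp_def incr_exponent_def)

lemma shift_coeffs_commute: "shift_coeffs i (shift_coeffs j b) = shift_coeffs j (shift_coeffs i b)"
proof (cases "i = j")
  case False
  then show ?thesis
    by (auto simp: shift_coeffs_def fun_eq_iff fun_upd_twist)
qed simp

lemma shift_coeffs_sum:
  fixes f :: "'x \<Rightarrow> 'k::semiring_0 coeffs"
  shows "shift_coeffs i (\<lambda>k \<beta>. \<Sum>x\<in>A. c x * f x k \<beta>) = (\<lambda>k \<beta>. \<Sum>x\<in>A. c x * shift_coeffs i (f x) k \<beta>)"
  by (auto simp: shift_coeffs_def fun_eq_iff)

lemma wr_act_eq_sum: "wr_act n b s = (\<lambda>k \<beta>. \<Sum>i<n. s i * shift_coeffs i b k \<beta>)"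
  unfolding wr_act_def shift_coeffs_def by (intro ext sum.cong) auto

lemma wr_act_commute: "wr_act n (wr_act n b s1) s2 = wr_act n (wr_act n b s2) s1"
proof -
  have twice: "wr_act n (wr_act n b s1) s2 =
      (\<lambda>k \<beta>. \<Sum>j<n. \<Sum>i<n. s2 j * s1 i * shift_coeffs j (shift_coeffs i b) k \<beta>)" for s1 s2
    by (simp only: wr_act_eq_sum shift_coeffs_sum) (simp add: sum_distrib_left mult.assoc)
  show ?thesis
    unfolding twice by (subst sum.swap) (simp add: shift_coeffs_commute mult.commute)
qed

lemma base_coeffs_zero [simp]: "base_coeffs m n (\<lambda>k \<alpha>. 0)"
  by (simp add: base_coeffs_def coeff_supp_def)

lemma base_coeffs_add:
  fixes b1 b2 :: "'k::comm_monoid_add coeffs"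
  assumes "base_coeffs m n b1" "base_coeffs m n b2"
  shows "base_coeffs m n (\<lambda>k \<alpha>. b1 k \<alpha> + b2 k \<alpha>)"
proof -
  have "coeff_supp (\<lambda>k \<alpha>. b1 k \<alpha> + b2 k \<alpha>) \<subseteq> coeff_supp b1 \<union> coeff_supp b2"
    by (auto simp: coeff_supp_def)
  then show ?thesis
    using assms unfolding base_coeffs_def by (auto intro: finite_subset) (metis add.left_neutral)+
qed

lemma base_coeffs_mult:
  fixes b :: "'k::mult_zero coeffs"
  assumes "base_coeffs m n b"
  shows "base_coeffs m n (\<lambda>k \<alpha>. c * b k \<alpha>)"
proof -
  have "coeff_supp (\<lambda>k \<alpha>. c * b k \<alpha>) \<subseteq> coeff_supp b"
    by (auto simp: coeff_supp_def)
  then show ?thesis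
    using assms unfolding base_coeffs_def by (auto intro: finite_subset dest: mult_not_zero)
qed

lemma base_coeffs_sum:
  fixes f :: "'x \<Rightarrow> 'k::comm_monoid_add coeffs"
  shows "(\<And>x. x \<in> I \<Longrightarrow> base_coeffs m n (f x)) \<Longrightarrow> base_coeffs m n (\<lambda>k \<alpha>. \<Sum>x\<in>I. f x k \<alpha>)"
  by (induction I rule: infinite_finite_induct) (simp_all add: base_coeffs_add)

lemma base_coeffs_shift:
  assumes b: "base_coeffs m n b" and i: "i < n"
  shows "base_coeffs m n (shift_coeffs i b)"
proof -
  have "finite (coeff_supp (shift_coeffs i b))"
    using b by (simp add: base_coeffs_def coeff_supp_shift_coeffs)
  moreover have "k < m \<and> (\<forall>j\<ge>n. \<beta> j = 0)" if "shift_coeffs i b k \<beta> \<noteq> 0" for k \<beta>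
  proof -
    have "b k (\<beta>(i := \<beta> i - 1)) \<noteq> 0"
      using that by (simp add: shift_coeffs_def split: if_splits)
    then have "k < m \<and> (\<forall>j\<ge>n. (\<beta>(i := \<beta> i - 1)) j = 0)"
      using b unfolding base_coeffs_def by blast
    with i show ?thesis
      by (metis fun_upd_other leD)
  qed
  ultimately show ?thesis
    unfolding base_coeffs_def by blast
qed

lemma base_coeffs_wr_act:
  fixes b :: "'k::field coeffs"
  shows "base_coeffs m n b \<Longrightarrow> base_coeffs m n (wr_act n b s)"
  unfolding wr_act_eq_sum by (intro base_coeffs_sum base_coeffs_mult base_coeffs_shift) auto

lemma wreath_simps [simp]:
  "car (wreath m n) = wr_carrier m n"
  "add (wreath m n) x y = (\<lambda>k \<alpha>. fst x k \<alpha> + fst y k \<alpha>, \<lambda>i. snd x i + snd y i)"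
  "zer (wreath m n) = (\<lambda>k \<alpha>. 0, \<lambda>i. 0)"
  "neg (wreath m n) x = (\<lambda>k \<alpha>. - fst x k \<alpha>, \<lambda>i. - snd x i)"
  "smul (wreath m n) c x = (\<lambda>k \<alpha>. c * fst x k \<alpha>, \<lambda>i. c * snd x i)"
  "br (wreath m n) x y =
     (\<lambda>k \<alpha>. wr_act n (fst x) (snd y) k \<alpha> - wr_act n (fst y) (snd x) k \<alpha>, \<lambda>i. 0)"
  by (simp_all add: wreath_def split: prod.splits)

lemma wr_act_add_left: "wr_act n (\<lambda>k \<alpha>. b1 k \<alpha> + b2 k \<alpha>) s k \<alpha> = wr_act n b1 s k \<alpha> + wr_act n b2 s k \<alpha>"
  and wr_act_add_right: "wr_act n b (\<lambda>i. s1 i + s2 i) k \<alpha> = wr_act n b s1 k \<alpha> + wr_act n b s2 k \<alpha>"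
  and wr_act_diff_left: "wr_act n (\<lambda>k \<alpha>. b1 k \<alpha> - b2 k \<alpha>) s k \<alpha> = wr_act n b1 s k \<alpha> - wr_act n b2 s k \<alpha>"
  and wr_act_mult_left: "wr_act n (\<lambda>k \<alpha>. c * b k \<alpha>) s k \<alpha> = c * wr_act n b s k \<alpha>"
  and wr_act_mult_right: "wr_act n b (\<lambda>i. c * s i) k \<alpha> = c * wr_act n b s k \<alpha>"
  unfolding wr_act_def
  by (simp_all add: sum.distrib[symmetric] sum_subtractf[symmetric] sum_distrib_left
      algebra_simps if_distrib cong: if_cong)

lemma wr_act_zero_left [simp]: "wr_act n (\<lambda>k \<alpha>. 0) s = (\<lambda>k \<alpha>. 0)"
  and wr_act_zero_right [simp]: "wr_act n b (\<lambda>i. 0) = (\<lambda>k \<alpha>. 0)"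
  by (auto simp: wr_act_def fun_eq_iff intro!: sum.neutral)

lemma wr_carrier_closed:
  fixes x y :: "'k::field wr_elem"
  assumes "x \<in> wr_carrier m n" "y \<in> wr_carrier m n"
  shows "(\<lambda>k \<alpha>. fst x k \<alpha> + fst y k \<alpha>, \<lambda>i. snd x i + snd y i) \<in> wr_carrier m n"
    and "(\<lambda>k \<alpha>. c * fst x k \<alpha>, \<lambda>i. c * snd x i) \<in> wr_carrier m n"
    and "(\<lambda>k \<alpha>. wr_act n (fst x) (snd y) k \<alpha> - wr_act n (fst y) (snd x) k \<alpha>, \<lambda>i. 0) \<in> wr_carrier m n"
proof -
  have "base_coeffs m n (\<lambda>k \<alpha>. wr_act n (fst x) (snd y) k \<alpha> + (-1) * wr_act n (fst y) (snd x) k \<alpha>)"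
    using assms by (intro base_coeffs_add base_coeffs_mult base_coeffs_wr_act) (simp_all add: wr_carrier_iff)
  then show "(\<lambda>k \<alpha>. wr_act n (fst x) (snd y) k \<alpha> - wr_act n (fst y) (snd x) k \<alpha>, \<lambda>i. 0) \<in> wr_carrier m n"
    by (simp add: wr_carrier_iff)
next
  have "snd x i + snd y i \<noteq> 0 \<Longrightarrow> i < n" for i
    using assms by (metis add.left_neutral wr_carrier_iff)
  then show "(\<lambda>k \<alpha>. fst x k \<alpha> + fst y k \<alpha>, \<lambda>i. snd x i + snd y i) \<in> wr_carrier m n"
    using assms by (simp add: wr_carrier_iff base_coeffs_add)
next
  show "(\<lambda>k \<alpha>. c * fst x k \<alpha>, \<lambda>i. c * snd x i) \<in> wr_carrier m n"
    using assms by (simp add: wr_carrier_iff base_coeffs_mult)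
qed

lemma wreath_jacobi:
  fixes x y z :: "'k::field wr_elem" and m n :: nat
  defines "W \<equiv> wreath m n"
  shows "add W (add W (br W x (br W y z)) (br W y (br W z x))) (br W z (br W x y)) = zer W"
  unfolding W_def
  by (simp add: wr_act_diff_left wr_act_commute[of n "fst x"] wr_act_commute[of n "fst y"]
      wr_act_commute[of n "fst z"])

lemma lie_algebra_wreath: "lie_algebra (wreath m n :: ('k::field, 'k wr_elem) lie_alg)"
  unfolding lie_algebra_def
proof (intro conjI ballI allI)
  fix x y z :: "'k wr_elem" and c d :: 'k
  let ?W = "wreath m n :: ('k, 'k wr_elem) lie_alg"
  show "zer ?W \<in> car ?W"
    by (simp add: wr_carrier_iff)
  assume xyz: "x \<in> car ?W" "y \<in> car ?W" "z \<in> car ?W"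
  then show "add ?W x y \<in> car ?W" "neg ?W x \<in> car ?W" "smul ?W c x \<in> car ?W" "br ?W x y \<in> car ?W"
    using wr_carrier_closed[of x m n y] wr_carrier_closed(2)[of x m n x "-1"] by simp_all
  show "add ?W (add ?W x y) z = add ?W x (add ?W y z)" "add ?W x y = add ?W y x"
    "add ?W (zer ?W) x = x" "add ?W (neg ?W x) x = zer ?W"
    "smul ?W c (smul ?W d x) = smul ?W (c * d) x" "smul ?W 1 x = x"
    "smul ?W c (add ?W x y) = add ?W (smul ?W c x) (smul ?W c y)"
    "smul ?W (c + d) x = add ?W (smul ?W c x) (smul ?W d x)"
    by (simp_all add: algebra_simps)
  show "br ?W (add ?W x y) z = add ?W (br ?W x z) (br ?W y z)"
    "br ?W x (add ?W y z) = add ?W (br ?W x y) (br ?W x z)"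
    "br ?W (smul ?W c x) y = smul ?W c (br ?W x y)"
    "br ?W x (smul ?W c y) = smul ?W c (br ?W x y)"
    "br ?W x x = zer ?W"
    by (simp_all add: wr_act_add_left wr_act_add_right wr_act_mult_left wr_act_mult_right algebra_simps)
  show "add ?W (add ?W (br ?W x (br ?W y z)) (br ?W y (br ?W z x))) (br ?W z (br ?W x y)) = zer ?W"
    by (rule wreath_jacobi)
qed

interpretation wreath: lie "wreath m n :: ('k::field, 'k wr_elem) lie_alg" for m n
  by (rule lie.intro) (rule lie_algebra_wreath)

lemma snd_lnbr_wreath: "snd (x :: 'k::field wr_elem) = (\<lambda>i. 0) \<Longrightarrow> snd (lnbr (wreath m n) x ys) = (\<lambda>i. 0)"
  by (induction ys arbitrary: x) simp_all

lemma wr_t_closed: "i < n \<Longrightarrow> wr_t i \<in> wr_carrier m n"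
  by (simp add: wr_carrier_iff base_coeffs_def coeff_supp_def wr_t_def)

definition wr_basis :: "nat \<Rightarrow> (nat \<Rightarrow> nat) \<Rightarrow> 'k::field wr_elem" where
  "wr_basis k \<alpha> = (\<lambda>k' \<alpha>'. if k' = k \<and> \<alpha>' = \<alpha> then 1 else 0, \<lambda>i. 0)"

lemma wr_basis_zero: "wr_basis k (\<lambda>_. 0) = wr_a k"
  by (simp add: wr_basis_def wr_a_def)

lemma wr_basis_closed:
  assumes "k < m" "\<forall>j\<ge>n. \<alpha> j = 0"
  shows "(wr_basis k \<alpha> :: 'k::field wr_elem) \<in> wr_carrier m n"
proof -
  have "coeff_supp (fst (wr_basis k \<alpha> :: 'k wr_elem)) = {(k, \<alpha>)}"
    by (auto simp: coeff_supp_def wr_basis_def)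
  then have "finite (coeff_supp (fst (wr_basis k \<alpha> :: 'k wr_elem)))"
    by simp
  with assms have "base_coeffs m n (fst (wr_basis k \<alpha> :: 'k wr_elem))"
    unfolding base_coeffs_def by (simp add: wr_basis_def)
  then show ?thesis
    by (simp add: wr_carrier_iff wr_basis_def)
qed

lemma wr_a_closed: "k < m \<Longrightarrow> wr_a k \<in> wr_carrier m n"
  using wr_basis_closed[of k m n "\<lambda>_. 0"] by (simp add: wr_basis_zero)

lemma wreath_relations_wreath: "wreath_relations (wreath m n :: ('k::field, 'k wr_elem) lie_alg) m n wr_a wr_t"
proof -
  have "snd (lnbr (wreath m n) (wr_a k) ys :: 'k wr_elem) = (\<lambda>i. 0)" for k ys
    by (rule snd_lnbr_wreath) (simp add: wr_a_def)
  moreover have "br (wreath m n) (wr_t i) (wr_t j) = (zer (wreath m n) :: 'k wr_elem)" for i j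
    by (simp add: wr_t_def)
  ultimately show ?thesis
    unfolding wreath_relations_def using wr_a_closed wr_t_closed by auto
qed

lemma decr_eq_iff_eq_incr: "(0 < \<beta> i \<and> \<beta>(i := \<beta> i - 1) = \<alpha>) \<longleftrightarrow> \<beta> = \<alpha>(i := Suc (\<alpha> i))"
  by (auto simp: fun_eq_iff)

lemma br_wr_basis_wr_t:
  assumes "i < n"
  shows "br (wreath m n) (wr_basis k \<alpha>) (wr_t i) = (wr_basis k (\<alpha>(i := Suc (\<alpha> i))) :: 'k::field wr_elem)"
proof -
  have "wr_act n b (snd (wr_t i)) = shift_coeffs i b" for b :: "'k coeffs"
    using assms by (simp add: wr_act_eq_sum wr_t_def if_distrib[where f="\<lambda>c. c * _"] cong: if_cong)
  moreover have "shift_coeffs i (fst (wr_basis k \<alpha> :: 'k wr_elem)) = fst (wr_basis k (\<alpha>(i := Suc (\<alpha> i))) :: 'k wr_elem)"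
    using decr_eq_iff_eq_incr[of _ i \<alpha>] by (auto simp: shift_coeffs_def wr_basis_def fun_eq_iff)
  ultimately show ?thesis
    by (simp add: wr_basis_def wr_t_def)
qed

lemma wreath_lsum:
  assumes "finite A" "\<And>x. x \<in> A \<Longrightarrow> g x \<in> car (wreath m n)"
  shows "wreath.lsum m n g A = (\<lambda>k \<alpha>. \<Sum>x\<in>A. fst (g x) k \<alpha>, \<lambda>i. \<Sum>x\<in>A. snd (g x) i)"
  using assms
proof (induction A rule: finite_induct)
  case (insert a A)
  then have "wreath.lsum m n g (insert a A) = add (wreath m n) (g a) (wreath.lsum m n g A)"
    by (intro wreath.lsum_insert) auto
  with insert show ?case
    by simp
qed simp

lemma exponent_vector_induct [consumes 1, case_names zero incr]:
  fixes \<alpha> :: "nat \<Rightarrow> nat"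
  assumes "\<forall>j\<ge>n. \<alpha> j = 0"
    and zero: "P (\<lambda>_. 0)"
    and incr: "\<And>\<alpha> i. i < n \<Longrightarrow> \<forall>j\<ge>n. \<alpha> j = 0 \<Longrightarrow> P \<alpha> \<Longrightarrow> P (\<alpha>(i := Suc (\<alpha> i)))"
  shows "P \<alpha>"
proof -
  have "P \<alpha>" if "\<forall>j\<ge>n. \<alpha> j = 0" "sum \<alpha> {..<n} = N" for \<alpha> N
    using that
  proof (induction N arbitrary: \<alpha>)
    case 0
    then have "\<alpha> j = 0" for j
      by (cases "j < n") auto
    then have "\<alpha> = (\<lambda>_. 0)"
      by auto
    with zero show ?case by simp
  next
    case (Suc N)
    then obtain i where i: "i < n" "0 < \<alpha> i"
      by (metis finite_lessThan gr0I lessThan_iff nat.distinct(1) sum_eq_0_iff)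
    define \<alpha>' where "\<alpha>' = \<alpha>(i := \<alpha> i - 1)"
    have \<alpha>: "\<alpha> = \<alpha>'(i := Suc (\<alpha>' i))"
      using i by (auto simp: \<alpha>'_def fun_eq_iff)
    have "sum \<alpha>' {..<n} = N"
      using Suc.prems i by (simp add: \<alpha>'_def sum.remove[of _ i] sum.cong[of _ _ \<alpha>' \<alpha>])
    moreover have "\<forall>j\<ge>n. \<alpha>' j = 0"
      using Suc.prems i by (simp add: \<alpha>'_def)
    ultimately show ?case
      unfolding \<alpha> using Suc.IH i incr by blast
  qed
  with assms(1) show ?thesis by blast
qed

lemma wr_basis_in_subalgebra:
  fixes S :: "'k::field wr_elem set"
  assumes S: "lie_subalgebra (wreath m n) S" and gens: "wr_a ` {..<m} \<union> wr_t ` {..<n} \<subseteq> S"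
    and "k < m" "\<forall>j\<ge>n. \<alpha> j = 0"
  shows "wr_basis k \<alpha> \<in> S"
  using assms(4)
proof (induction \<alpha> rule: exponent_vector_induct)
  case zero
  with gens \<open>k < m\<close> show ?case
    by (auto simp: wr_basis_zero)
next
  case (incr \<alpha> i)
  with S gens show ?case
    unfolding lie_subalgebra_def by (metis br_wr_basis_wr_t image_subset_iff le_supE lessThan_iff)
qed

lemma sum_coeff_supp_delta:
  fixes b :: "'k::field coeffs"
  assumes "finite (coeff_supp b)"
  shows "(\<Sum>p\<in>coeff_supp b. b (fst p) (snd p) * (if k = fst p \<and> \<alpha> = snd p then 1 else 0)) = b k \<alpha>"
proof -
  have "(\<Sum>p\<in>coeff_supp b. b (fst p) (snd p) * (if k = fst p \<and> \<alpha> = snd p then 1 else 0))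
      = (\<Sum>p\<in>coeff_supp b. if p = (k, \<alpha>) then b k \<alpha> else 0)"
    by (intro sum.cong) auto
  also have "\<dots> = (if (k, \<alpha>) \<in> coeff_supp b then b k \<alpha> else 0)"
    using assms by simp
  also have "\<dots> = b k \<alpha>"
    by (simp add: coeff_supp_def)
  finally show ?thesis .
qed

lemma wreath_decompose:
  assumes x: "x \<in> wr_carrier m n"
  shows "x = add (wreath m n)
      (wreath.lsum m n (\<lambda>p. smul (wreath m n) (fst x (fst p) (snd p)) (wr_basis (fst p) (snd p)))
        (coeff_supp (fst x)))
      (wreath.lsum m n (\<lambda>i. smul (wreath m n) (snd x i) (wr_t i)) {..<n})"
proof -
  have fin: "finite (coeff_supp (fst x))" and s: "\<And>i. snd x i \<noteq> 0 \<Longrightarrow> i < n"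
    using x by (auto simp: wr_carrier_iff base_coeffs_def)
  have basis: "smul (wreath m n) (fst x (fst p) (snd p)) (wr_basis (fst p) (snd p)) \<in> car (wreath m n)"
    if "p \<in> coeff_supp (fst x)" for p
  proof (rule wreath.smul_closed)
    show "wr_basis (fst p) (snd p) \<in> car (wreath m n)"
      unfolding wreath_simps using that x
      by (intro wr_basis_closed) (auto simp: wr_carrier_iff base_coeffs_def coeff_supp_def)
  qed
  have t: "smul (wreath m n) (snd x i) (wr_t i) \<in> car (wreath m n)" if "i \<in> {..<n}" for i
    using that by (intro wreath.smul_closed) (simp add: wr_t_closed)
  have "wreath.lsum m n (\<lambda>p. smul (wreath m n) (fst x (fst p) (snd p)) (wr_basis (fst p) (snd p)))
      (coeff_supp (fst x)) = (fst x, \<lambda>i. 0)"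
    using wreath_lsum[where g = "\<lambda>p. smul (wreath m n) (fst x (fst p) (snd p)) (wr_basis (fst p) (snd p))",
        OF fin basis]
    by (simp add: wr_basis_def sum_coeff_supp_delta[OF fin])
  moreover have "wreath.lsum m n (\<lambda>i. smul (wreath m n) (snd x i) (wr_t i)) {..<n} = (\<lambda>k \<alpha>. 0, snd x)"
    using wreath_lsum[where g = "\<lambda>i. smul (wreath m n) (snd x i) (wr_t i)", OF finite_lessThan t] s
    by (auto simp: wr_t_def fun_eq_iff if_distrib[where f="\<lambda>c. _ * c"] cong: if_cong)
  ultimately show ?thesis
    by simp
qed

lemma lie_generates_wreath:
  "lie_generates (wreath m n :: ('k::field, 'k wr_elem) lie_alg) (wr_a ` {..<m} \<union> wr_t ` {..<n})"
  unfolding lie_generates_def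
proof (intro conjI allI impI)
  show "wr_a ` {..<m} \<union> wr_t ` {..<n} \<subseteq> (car (wreath m n) :: 'k wr_elem set)"
    using wr_a_closed wr_t_closed by auto
  fix S :: "'k wr_elem set"
  assume "lie_subalgebra (wreath m n) S \<and> wr_a ` {..<m} \<union> wr_t ` {..<n} \<subseteq> S"
  then have S: "lie_subalgebra (wreath m n) S" and gens: "wr_a ` {..<m} \<union> wr_t ` {..<n} \<subseteq> S"
    by auto
  show "car (wreath m n) \<subseteq> S"
  proof
    fix x :: "'k wr_elem"
    assume x: "x \<in> car (wreath m n)"
    have add_S: "add (wreath m n) u v \<in> S" if "u \<in> S" "v \<in> S" for u v
      using S that unfolding lie_subalgebra_def by blast
    have smul_S: "smul (wreath m n) c u \<in> S" if "u \<in> S" for c u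
      using S that unfolding lie_subalgebra_def by blast
    have "wr_basis (fst p) (snd p) \<in> S" if "p \<in> coeff_supp (fst x)" for p
      using that x by (intro wr_basis_in_subalgebra[OF S gens])
        (auto simp: wr_carrier_iff base_coeffs_def coeff_supp_def)
    then have "wreath.lsum m n (\<lambda>p. smul (wreath m n) (fst x (fst p) (snd p)) (wr_basis (fst p) (snd p)))
        (coeff_supp (fst x)) \<in> S"
      by (intro wreath.lsum_in_subalgebra[OF S] smul_S)
    moreover have "wreath.lsum m n (\<lambda>i. smul (wreath m n) (snd x i) (wr_t i)) {..<n} \<in> S"
      using gens by (intro wreath.lsum_in_subalgebra[OF S] smul_S) auto
    ultimately show "x \<in> S"
      using x by (subst wreath_decompose[of x m n]) (simp_all only: add_S wreath_simps(1))
  qed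
qed

section \<open>The universal homomorphism\<close>

context wreath_relations_lie
begin

definition base_map :: "'k coeffs \<Rightarrow> 'a" where
  "base_map b = lsum (\<lambda>p. smul L (b (fst p) (snd p)) (monomial (fst p) (snd p))) (coeff_supp b)"

definition top_map :: "(nat \<Rightarrow> 'k) \<Rightarrow> 'a" where
  "top_map s = lsum (\<lambda>i. smul L (s i) (t i)) {..<n}"

definition lift :: "'k wr_elem \<Rightarrow> 'a" where
  "lift x = add L (base_map (fst x)) (top_map (snd x))"

lemma coeff_supp_bounded: "base_coeffs m n b \<Longrightarrow> p \<in> coeff_supp b \<Longrightarrow> fst p < m"
  by (auto simp: base_coeffs_def coeff_supp_def)

lemma base_map_closed [simp]: "base_coeffs m n b \<Longrightarrow> base_map b \<in> car L"
  unfolding base_map_def by (intro lsum_closed) (simp add: coeff_supp_bounded)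

lemma top_map_closed [simp]: "top_map s \<in> car L"
  unfolding top_map_def by (intro lsum_closed) simp

lemma base_map_superset:
  assumes "base_coeffs m n b" "finite D" "coeff_supp b \<subseteq> D" "\<And>p. p \<in> D \<Longrightarrow> fst p < m"
  shows "base_map b = lsum (\<lambda>p. smul L (b (fst p) (snd p)) (monomial (fst p) (snd p))) D"
  unfolding base_map_def using assms by (intro lsum_mono_neutral) (auto simp: coeff_supp_def)

lemma base_map_zero: "base_map (\<lambda>k \<alpha>. 0) = zer L"
  by (simp add: base_map_def coeff_supp_def)

lemma base_map_add:
  assumes b1: "base_coeffs m n b1" and b2: "base_coeffs m n b2"
  shows "base_map (\<lambda>k \<alpha>. b1 k \<alpha> + b2 k \<alpha>) = add L (base_map b1) (base_map b2)"
proof -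
  let ?D = "coeff_supp b1 \<union> coeff_supp b2"
  let ?term = "\<lambda>b p. smul L (b (fst p) (snd p)) (monomial (fst p) (snd p))"
  have D: "finite ?D" "\<And>p. p \<in> ?D \<Longrightarrow> fst p < m"
    using assms by (auto simp: base_coeffs_def coeff_supp_def)
  have "base_map (\<lambda>k \<alpha>. b1 k \<alpha> + b2 k \<alpha>) = lsum (?term (\<lambda>k \<alpha>. b1 k \<alpha> + b2 k \<alpha>)) ?D"
    using D base_coeffs_add[OF b1 b2] by (intro base_map_superset) (auto simp: coeff_supp_def)
  also have "\<dots> = lsum (\<lambda>p. add L (?term b1 p) (?term b2 p)) ?D"
    using D by (intro lsum_cong) (auto simp: smul_add_left)
  also have "\<dots> = add L (lsum (?term b1) ?D) (lsum (?term b2) ?D)"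
    using D by (intro lsum_add) auto
  also have "\<dots> = add L (base_map b1) (base_map b2)"
    using base_map_superset[OF b1 D(1) Un_upper1 D(2)] base_map_superset[OF b2 D(1) Un_upper2 D(2)]
    by simp
  finally show ?thesis .
qed

lemma base_map_mult:
  assumes b: "base_coeffs m n b"
  shows "base_map (\<lambda>k \<alpha>. c * b k \<alpha>) = smul L c (base_map b)"
proof -
  have "base_map (\<lambda>k \<alpha>. c * b k \<alpha>)
      = lsum (\<lambda>p. smul L (c * b (fst p) (snd p)) (monomial (fst p) (snd p))) (coeff_supp b)"
    using b base_coeffs_mult[OF b, of c]
    by (intro base_map_superset) (auto simp: coeff_supp_def base_coeffs_def)
  also have "\<dots> = lsum (\<lambda>p. smul L c (smul L (b (fst p) (snd p)) (monomial (fst p) (snd p)))) (coeff_supp b)"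
    using b by (intro lsum_cong) (auto simp: coeff_supp_bounded smul_smul)
  also have "\<dots> = smul L c (base_map b)"
    unfolding base_map_def using b by (intro lsum_smul[symmetric]) (simp add: coeff_supp_bounded)
  finally show ?thesis .
qed

lemma base_map_sum:
  assumes "finite I" "\<And>x. x \<in> I \<Longrightarrow> base_coeffs m n (f x)"
  shows "base_map (\<lambda>k \<alpha>. \<Sum>x\<in>I. f x k \<alpha>) = lsum (\<lambda>x. base_map (f x)) I"
  using assms
proof (induction I rule: finite_induct)
  case (insert a I)
  then have "lsum (\<lambda>x. base_map (f x)) (insert a I) = add L (base_map (f a)) (lsum (\<lambda>x. base_map (f x)) I)"
    by (intro lsum_insert) auto
  with insert show ?case
    by (simp add: base_map_add base_coeffs_sum)
qed (simp add: base_map_zero)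

lemma base_map_shift:
  assumes b: "base_coeffs m n b" and i: "i < n"
  shows "base_map (shift_coeffs i b) = br L (base_map b) (t i)"
proof -
  have "base_map (shift_coeffs i b)
      = lsum (\<lambda>p. smul L (shift_coeffs i b (fst p) (snd p)) (monomial (fst p) (snd p)))
          (incr_exponent i ` coeff_supp b)"
    unfolding base_map_def coeff_supp_shift_coeffs ..
  also have "\<dots> = lsum (\<lambda>p. br L (smul L (b (fst p) (snd p)) (monomial (fst p) (snd p))) (t i)) (coeff_supp b)"
    using b i inj_incr_exponent[of i]
    by (subst lsum_reindex) (auto simp: incr_exponent_def base_coeffs_def coeff_supp_def monomial_incr
        br_smul_left inj_on_def intro!: lsum_cong)
  also have "\<dots> = br L (base_map b) (t i)"
    unfolding base_map_def using b i by (intro lsum_br_left[symmetric]) (auto simp: coeff_supp_bounded)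
  finally show ?thesis .
qed

lemma base_map_wr_act:
  assumes b: "base_coeffs m n b"
  shows "base_map (wr_act n b s) = lsum (\<lambda>i. smul L (s i) (br L (base_map b) (t i))) {..<n}"
  using b unfolding wr_act_eq_sum
  by (subst base_map_sum) (auto simp: base_coeffs_mult base_coeffs_shift base_map_mult
      base_map_shift intro: lsum_cong)


lemma top_map_add: "top_map (\<lambda>i. s1 i + s2 i) = add L (top_map s1) (top_map s2)"
  unfolding top_map_def by (subst lsum_add[symmetric]) (auto simp: smul_add_left intro: lsum_cong)

lemma top_map_mult: "top_map (\<lambda>i. c * s i) = smul L c (top_map s)"
  unfolding top_map_def by (subst lsum_smul) (auto simp: smul_smul intro: lsum_cong)

lemma top_map_zero: "top_map (\<lambda>i. 0) = zer L"
  unfolding top_map_def by (intro lsum_zer) simp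

lemma top_map_wr_t: "i < n \<Longrightarrow> top_map (snd (wr_t i)) = t i"
  unfolding top_map_def wr_t_def by (subst lsum_single[of i]) auto

lemma base_map_wr_a: "k < m \<Longrightarrow> base_map (fst (wr_a k)) = a k"
proof -
  assume k: "k < m"
  have supp: "coeff_supp (fst (wr_a k :: 'k wr_elem)) = {(k, \<lambda>_. 0)}"
    by (auto simp: coeff_supp_def wr_a_def)
  have "base_map (fst (wr_a k)) = smul L 1 (monomial k (\<lambda>_. 0))"
    unfolding base_map_def supp using k by (subst lsum_single[of "(k, \<lambda>_. 0)"]) (auto simp: wr_a_def)
  with k show ?thesis
    by (simp add: monomial_def)
qed

lemma br_monomial_base_map:
  assumes "k < m" "base_coeffs m n b"
  shows "br L (monomial k \<alpha>) (base_map b) = zer L"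
proof -
  have "br L (monomial k \<alpha>) (base_map b)
      = lsum (\<lambda>p. br L (monomial k \<alpha>) (smul L (b (fst p) (snd p)) (monomial (fst p) (snd p)))) (coeff_supp b)"
    unfolding base_map_def using assms by (intro lsum_br_right) (auto simp: coeff_supp_bounded)
  also have "\<dots> = zer L"
    using assms by (intro lsum_zer) (simp add: coeff_supp_bounded br_smul_right br_monomial_monomial)
  finally show ?thesis .
qed

lemma br_base_map_base_map:
  assumes b1: "base_coeffs m n b1" and b2: "base_coeffs m n b2"
  shows "br L (base_map b1) (base_map b2) = zer L"
proof -
  have "br L (base_map b1) (base_map b2)
      = lsum (\<lambda>p. br L (smul L (b1 (fst p) (snd p)) (monomial (fst p) (snd p))) (base_map b2)) (coeff_supp b1)"
    unfolding base_map_def[of b1] using assms by (intro lsum_br_left) (auto simp: coeff_supp_bounded)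
  also have "\<dots> = zer L"
    using assms by (intro lsum_zer) (simp add: coeff_supp_bounded br_smul_left br_monomial_base_map)
  finally show ?thesis .
qed

lemma br_top_map_top_map: "br L (top_map s1) (top_map s2) = zer L"
proof -
  have t_top: "br L (t i) (top_map s2) = zer L" if "i < n" for i
  proof -
    have "br L (t i) (top_map s2) = lsum (\<lambda>j. br L (t i) (smul L (s2 j) (t j))) {..<n}"
      unfolding top_map_def using that by (intro lsum_br_right) auto
    also have "\<dots> = zer L"
      using that by (intro lsum_zer) (simp add: br_smul_right br_t_t)
    finally show ?thesis .
  qed
  have "br L (top_map s1) (top_map s2) = lsum (\<lambda>i. smul L (s1 i) (br L (t i) (top_map s2))) {..<n}"
    unfolding top_map_def[of s1] by (subst lsum_br_left) (auto simp: br_smul_left intro: lsum_cong)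
  also have "\<dots> = zer L"
    using t_top by (intro lsum_zer) simp
  finally show ?thesis .
qed

lemma br_base_map_top_map:
  assumes b: "base_coeffs m n b"
  shows "br L (base_map b) (top_map s) = base_map (wr_act n b s)"
  unfolding top_map_def base_map_wr_act[OF b] using b
  by (subst lsum_br_right) (auto simp: br_smul_right intro: lsum_cong)


lemma lift_br:
  assumes x: "x \<in> car (wreath m n)" and y: "y \<in> car (wreath m n)"
  shows "lift (br (wreath m n) x y) = br L (lift x) (lift y)"
proof -
  have b: "base_coeffs m n (fst x)" "base_coeffs m n (fst y)"
    using x y by (simp_all add: wr_carrier_iff)
  let ?xy = "base_map (wr_act n (fst x) (snd y))" and ?yx = "base_map (wr_act n (fst y) (snd x))"
  have xy: "base_coeffs m n (wr_act n (fst x) (snd y))" "base_coeffs m n (wr_act n (fst y) (snd x))"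
    using b by (simp_all add: base_coeffs_wr_act)
  have diff: "(\<lambda>k \<alpha>. wr_act n (fst x) (snd y) k \<alpha> - wr_act n (fst y) (snd x) k \<alpha>)
      = (\<lambda>k \<alpha>. wr_act n (fst x) (snd y) k \<alpha> + (-1) * wr_act n (fst y) (snd x) k \<alpha>)"
    by simp
  have "lift (br (wreath m n) x y)
      = add L (base_map (\<lambda>k \<alpha>. wr_act n (fst x) (snd y) k \<alpha> + (-1) * wr_act n (fst y) (snd x) k \<alpha>))
          (top_map (\<lambda>i. 0))"
    unfolding lift_def wreath_simps fst_conv snd_conv diff ..
  also have "\<dots> = add L ?xy (smul L (-1) ?yx)"
    using xy
    by (simp only: base_map_add[OF xy(1) base_coeffs_mult[OF xy(2)]] base_map_mult[OF xy(2)] top_map_zero)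
      simp
  also have "\<dots> = add L (smul L (-1) ?yx) ?xy"
    using xy by (simp add: add_commute)
  also have "\<dots> = br L (lift x) (lift y)"
    using b xy
    by (simp add: lift_def br_add_left br_add_right br_base_map_base_map br_top_map_top_map
        br_base_map_top_map br_antisym[of "base_map (fst y)" "top_map (snd x)"])
  finally show ?thesis .
qed

lemma lie_hom_lift: "lie_hom (wreath m n) L lift"
  unfolding lie_hom_def
proof (intro conjI ballI allI)
  fix x y :: "'k wr_elem" and c :: 'k
  assume x: "x \<in> car (wreath m n)" and y: "y \<in> car (wreath m n)"
  then have b: "base_coeffs m n (fst x)" "base_coeffs m n (fst y)"
    by (simp_all add: wr_carrier_iff)
  show "lift x \<in> car L"
    using b by (simp add: lift_def)
  show "lift (add (wreath m n) x y) = add L (lift x) (lift y)"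
    using b by (simp add: lift_def base_map_add top_map_add add_add_swap)
  show "lift (smul (wreath m n) c x) = smul L c (lift x)"
    using b by (simp add: lift_def base_map_mult top_map_mult smul_add_right)
  show "lift (br (wreath m n) x y) = br L (lift x) (lift y)"
    using x y by (rule lift_br)
qed

lemma lift_wr_a:
  assumes "k < m"
  shows "lift (wr_a k) = a k"
proof -
  have "snd (wr_a k :: 'k wr_elem) = (\<lambda>i. 0)"
    by (simp add: wr_a_def)
  with assms show ?thesis
    by (simp add: lift_def base_map_wr_a top_map_zero)
qed

lemma lift_wr_t:
  assumes "i < n"
  shows "lift (wr_t i) = t i"
proof -
  have "fst (wr_t i :: 'k wr_elem) = (\<lambda>k \<alpha>. 0)"
    by (simp add: wr_t_def)
  with assms show ?thesis
    by (simp add: lift_def top_map_wr_t base_map_zero)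
qed

end

theorem corollary2:
  fixes m n :: nat
  assumes char_ne_2: "(2::'k::field) \<noteq> 0"
  shows "lie_algebra (wreath m n :: ('k, 'k wr_elem) lie_alg)
    \<and> wreath_relations (wreath m n :: ('k, 'k wr_elem) lie_alg) m n wr_a wr_t
    \<and> lie_generates (wreath m n :: ('k, 'k wr_elem) lie_alg) (wr_a ` {..<m} \<union> wr_t ` {..<n})
    \<and> (\<forall>(L :: ('k, 'b) lie_alg) a t. lie_algebra L \<and> wreath_relations L m n a t \<longrightarrow>
         (\<exists>f. lie_hom (wreath m n) L f \<and> (\<forall>k<m. f (wr_a k) = a k) \<and> (\<forall>i<n. f (wr_t i) = t i) \<and>
              (\<forall>g. lie_hom (wreath m n) L g \<and> (\<forall>k<m. g (wr_a k) = a k) \<and> (\<forall>i<n. g (wr_t i) = t i)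
                   \<longrightarrow> (\<forall>x\<in>car (wreath m n). g x = f x))))"
proof (intro conjI allI impI lie_algebra_wreath wreath_relations_wreath lie_generates_wreath)
  fix L :: "('k, 'b) lie_alg" and a t
  assume "lie_algebra L \<and> wreath_relations L m n a t"
  then interpret wreath_relations_lie L m n a t
    by unfold_locales auto
  show "\<exists>f. lie_hom (wreath m n) L f \<and> (\<forall>k<m. f (wr_a k) = a k) \<and> (\<forall>i<n. f (wr_t i) = t i) \<and>
      (\<forall>g. lie_hom (wreath m n) L g \<and> (\<forall>k<m. g (wr_a k) = a k) \<and> (\<forall>i<n. g (wr_t i) = t i)
        \<longrightarrow> (\<forall>x\<in>car (wreath m n). g x = f x))"
  proof (rule exI[of _ lift], intro conjI allI impI ballI)
    show "lie_hom (wreath m n) L lift"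
      by (rule lie_hom_lift)
    show "lift (wr_a k) = a k" if "k < m" for k
      using that by (rule lift_wr_a)
    show "lift (wr_t i) = t i" if "i < n" for i
      using that by (rule lift_wr_t)
    fix g and x :: "'k wr_elem"
    assume g: "lie_hom (wreath m n) L g \<and> (\<forall>k<m. g (wr_a k) = a k) \<and> (\<forall>i<n. g (wr_t i) = t i)"
      and x: "x \<in> car (wreath m n)"
    have "g y = lift y" if "y \<in> wr_a ` {..<m} \<union> wr_t ` {..<n}" for y
      using that g by (auto simp: lift_wr_a lift_wr_t)
    with g x show "g x = lift x"
      using lie_hom_eq_on_generated[OF lie_algebra_wreath lie_algebra _ lie_hom_lift lie_generates_wreath]
      by blast
  qed
qed

end
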